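(* Let $\Psi=\langle \mathcal{S},\mathcal{P},\mathcal{T}\rangle$ with $\mathcal{T}=\langle prov,req\rangle$ be an SPL and let $c\in\mathcal{C}$ be redundant. Define $\mathcal{T}'=\langle prov',req'\rangle$ by $prov'(f)=prov(f)\setminus\{A : c\in A\}$ and $req'(f)=req(f)\setminus\{A: c\in A\}$ for every $f\in\mathcal{F}$, and let $\Psi'=\langle \mathcal{S},\mathcal{P},\mathcal{T}'\rangle$. Then $Prod(\Psi)=Prod(\Psi')$.
   Context: An SPL $\Psi=\langle \mathcal{S},\mathcal{P},\mathcal{T}\rangle$ consists of a finite set of features $\mathcal{F}$, a finite set of components $\mathcal{C}$, a scope $\mathcal{S}\subseteq \mathcal{P}ow(\mathcal{F})$ (elements are specifications), a platform $\mathcal{P}\subseteq \mathcal{P}ow(\mathcal{C})$ (elements are architectures), and a traceability relation $\mathcal{T}=\langle prov, req\rangle$ with $prov, req:\mathcal{F}\to\mathcal{P}ow(\mathcal{P}ow(\mathcal{C}))$. For $C\subseteq\mathcal{C}$, $f\in\mathcal{F}$: $implements_\Psi(C,f)$ iff $\exists C_1\in prov(f), C_2\in req(f)$ with $C_2\subseteq C_1\subseteq C$; $Provided\_by_\Psi(C)=\{f: implements_\Psi(C,f)\}$. $\mathrm{Covers}_\Psi(C,F)$ iff $Provided\_by_\Psi(C)\in\mathcal{S}$ and $F\subseteq Provided\_by_\Psi(C)$. The set of products is $Prod(\Psi)=\{\langle F,C\rangle : F\in\mathcal{S}, C\in\mathcal{P}, \mathrm{Covers}_\Psi(C,F)\}$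 (for $\Psi'$ all these notions are computed with $\mathcal{T}'$). A component $c\in\mathcal{C}$ is redundant (in $\Psi$) if for every $C\in\mathcal{P}$ with $c\in C$ there exists $C'\in\mathcal{P}$ with $c\notin C'$, $C'\subseteq C$ and $Provided\_by_\Psi(C)=Provided\_by_\Psi(C')$. *)

theory Defs
  imports Main
begin

text \<open>An SPL over feature universe FF and component universe CC, with scope S,
platform P and traceability relation (prov, req).\<close>

definition is_SPL ::
  "'f set \<Rightarrow> 'c set \<Rightarrow> 'f set set \<Rightarrow> 'c set set \<Rightarrow> ('f \<Rightarrow> 'c set set) \<Rightarrow> ('f \<Rightarrow> 'c set set) \<Rightarrow> bool" where
  "is_SPL FF CC S P prov req \<longleftrightarrow>
     finite FF \<and> finite CC \<and> S \<subseteq> Pow FF \<and> P \<subseteq> Pow CC \<and>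
     (\<forall>f\<in>FF. prov f \<subseteq> Pow CC \<and> req f \<subseteq> Pow CC)"

definition implements ::
  "('f \<Rightarrow> 'c set set) \<Rightarrow> ('f \<Rightarrow> 'c set set) \<Rightarrow> 'c set \<Rightarrow> 'f \<Rightarrow> bool" where
  "implements prov req C f \<longleftrightarrow> (\<exists>C1\<in>prov f. \<exists>C2\<in>req f. C2 \<subseteq> C1 \<and> C1 \<subseteq> C)"

definition Provided_by ::
  "'f set \<Rightarrow> ('f \<Rightarrow> 'c set set) \<Rightarrow> ('f \<Rightarrow> 'c set set) \<Rightarrow> 'c set \<Rightarrow> 'f set" where
  "Provided_by FF prov req C = {f\<in>FF. implements prov req C f}"

definition Covers ::
  "'f set \<Rightarrow> 'f set set \<Rightarrow> ('f \<Rightarrow> 'c set set) \<Rightarrow> ('f \<Rightarrow> 'c set set) \<Rightarrow> 'c set \<Rightarrow> 'f set \<Rightarrow> bool" where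
  "Covers FF S prov req C F \<longleftrightarrow> Provided_by FF prov req C \<in> S \<and> F \<subseteq> Provided_by FF prov req C"

definition Prod ::
  "'f set \<Rightarrow> 'f set set \<Rightarrow> 'c set set \<Rightarrow> ('f \<Rightarrow> 'c set set) \<Rightarrow> ('f \<Rightarrow> 'c set set) \<Rightarrow> ('f set \<times> 'c set) set" where
  "Prod FF S P prov req = {(F, C). F \<in> S \<and> C \<in> P \<and> Covers FF S prov req C F}"

definition redundant ::
  "'f set \<Rightarrow> 'c set set \<Rightarrow> ('f \<Rightarrow> 'c set set) \<Rightarrow> ('f \<Rightarrow> 'c set set) \<Rightarrow> 'c \<Rightarrow> bool" where
  "redundant FF P prov req c \<longleftrightarrow>
     (\<forall>C\<in>P. c \<in> C \<longrightarrow> (\<exists>C'\<in>P. c \<notin> C' \<and> C' \<subseteq> C \<and>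
        Provided_by FF prov req C = Provided_by FF prov req C'))"

definition remove_comp :: "'c \<Rightarrow> ('f \<Rightarrow> 'c set set) \<Rightarrow> ('f \<Rightarrow> 'c set set)" where
  "remove_comp c t = (\<lambda>f. t f - {A. c \<in> A})"

end

theory Submission imports Defs begin

(* Pruning every implementation set containing c from prov and req can only lose
   implementations (the pruned relation implements a feature only if the original does),
   and it loses none on architectures avoiding c.  For an architecture C containing a
   redundant c, redundancy yields a sub-architecture C' without c providing the same
   features; implementations on C' survive the pruning and lift to C by monotonicity of
   "implements" in the architecture.  Hence Provided_by is unchanged on every architecture
   of the platform.  Since Prod depends on the traceability relation only through
   Provided_by on platform architectures, the two product sets coincide. *)

lemma implements_mono:
  assumes "implements prov req C' f" and "C' \<subseteq> C"
  shows "implements prov req C f"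
  using assms unfolding implements_def by blast

lemma implements_remove_comp_imp:
  assumes "implements (remove_comp c prov) (remove_comp c req) C f"
  shows "implements prov req C f"
  using assms unfolding implements_def remove_comp_def by blast

text \<open>On an architecture avoiding c, every witnessing pair of sets avoids c too,
  so it survives the pruning.\<close>
lemma implements_remove_comp_if_notin:
  assumes "c \<notin> C" and "implements prov req C f"
  shows "implements (remove_comp c prov) (remove_comp c req) C f"
proof -
  obtain C1 C2 where C12: "C1 \<in> prov f" "C2 \<in> req f" "C2 \<subseteq> C1" "C1 \<subseteq> C"
    using assms(2) unfolding implements_def by blast
  then have "c \<notin> C1" "c \<notin> C2" using assms(1) by blast+
  with C12 show ?thesis unfolding implements_def remove_comp_def by blast
qed

lemma Provided_by_remove_comp_subset:
  "Provided_by FF (remove_comp c prov) (remove_comp c req) C \<subseteq> Provided_by FF prov req C"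
  unfolding Provided_by_def using implements_remove_comp_imp[of c prov req C] by auto

lemma Provided_by_remove_comp_notin:
  assumes "c \<notin> C"
  shows "Provided_by FF (remove_comp c prov) (remove_comp c req) C = Provided_by FF prov req C"
  using implements_remove_comp_imp[of c prov req C]
    implements_remove_comp_if_notin[OF assms, of prov req]
  unfolding Provided_by_def by auto

lemma Provided_by_remove_redundant:
  assumes red: "redundant FF P prov req c" and "C \<in> P"
  shows "Provided_by FF (remove_comp c prov) (remove_comp c req) C = Provided_by FF prov req C"
proof (cases "c \<in> C")
  case False
  then show ?thesis by (rule Provided_by_remove_comp_notin)
next
  case True
  with red \<open>C \<in> P\<close> obtain C' where
    "c \<notin> C'" and "C' \<subseteq> C" and same: "Provided_by FF prov req C = Provided_by FF prov req C'"
    unfolding redundant_def by blast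
  have "Provided_by FF prov req C' \<subseteq> Provided_by FF (remove_comp c prov) (remove_comp c req) C"
    using implements_remove_comp_if_notin[OF \<open>c \<notin> C'\<close>, of prov req]
      implements_mono[OF _ \<open>C' \<subseteq> C\<close>, of "remove_comp c prov" "remove_comp c req"]
    unfolding Provided_by_def by auto
  with same show ?thesis
    using Provided_by_remove_comp_subset[of FF c prov req C] by (simp add: subset_antisym)
qed

lemma Prod_cong_Provided_by:
  assumes "\<And>C. C \<in> P \<Longrightarrow> Provided_by FF prov' req' C = Provided_by FF prov req C"
  shows "Prod FF S P prov' req' = Prod FF S P prov req"
  using assms unfolding Prod_def Covers_def by auto

theorem mainTheorem4:
  fixes FF :: "'f set" and CC :: "'c set" and S :: "'f set set" and P :: "'c set set"
    and prov req :: "'f \<Rightarrow> 'c set set" and c :: 'c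
  assumes "is_SPL FF CC S P prov req"
    and "c \<in> CC"
    and "redundant FF P prov req c"
  shows "Prod FF S P prov req = Prod FF S P (remove_comp c prov) (remove_comp c req)"
proof -
  have "\<And>C. C \<in> P \<Longrightarrow>
      Provided_by FF (remove_comp c prov) (remove_comp c req) C = Provided_by FF prov req C"
    using Provided_by_remove_redundant[OF assms(3)] .
  then show ?thesis by (rule Prod_cong_Provided_by[symmetric])
qed

end
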